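(* Let $P$ be a real signed permutation matrix (of any size $n\times n$) all of whose eigenvalues lie in the closed left half-plane $\{z\in\mathbb{C}:\operatorname{Re} z\le 0\}$. Then $P = R - E$, where $R$ is a real skew-symmetric matrix ($R^T=-R$) and $E$ is a diagonal matrix each of whose diagonal entries equals $0$ or $1$.
   Context: A real signed permutation matrix is a square matrix with all entries in $\{-1,0,+1\}$ having exactly one nonzero entry in each row and in each column. *)

theory Defs
  imports "Jordan_Normal_Form.Char_Poly"
begin

definition signed_perm_mat :: "real mat \<Rightarrow> bool" where
  "signed_perm_mat P \<longleftrightarrow>
     dim_row P = dim_col P \<and>
     (\<forall>i<dim_row P. \<forall>j<dim_col P. P $$ (i,j) \<in> {-1, 0, 1}) \<and>
     (\<forall>i<dim_row P. \<exists>!j. j < dim_col P \<and> P $$ (i,j) \<noteq> 0) \<and>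
     (\<forall>j<dim_col P. \<exists>!i. i < dim_row P \<and> P $$ (i,j) \<noteq> 0)"

end

theory Submission
  imports Defs "HOL-Combinatorics.Orbits"
begin

text \<open>A signed permutation matrix \<open>P\<close> is monomial along a permutation \<open>p\<close>. If \<open>i\<close> lies on a
cycle of \<open>p\<close> of length \<open>k\<close> and \<open>S\<close> is the product of the signs met along that cycle, then
every \<open>l\<close> with \<open>l ^ k = S\<close> is an eigenvalue of \<open>P\<close>: the eigenvector is supported on the
cycle, with entry \<open>l ^ m / (product of the first m signs)\<close> at \<open>(p ^^ m) i\<close>. As the spectrum
lies in the closed left half-plane, \<open>S = 1\<close> is impossible (take \<open>l = 1\<close>) and so is \<open>k \<ge> 3\<close>
(take \<open>l = cis (pi / k)\<close>). Hence every cycle is a fixed point with sign \<open>-1\<close> or a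
transposition with sign product \<open>-1\<close>: the diagonal entries of \<open>P\<close> are \<open>0\<close> or \<open>-1\<close>, and off
the diagonal \<open>P\<close> is antisymmetric. Then \<open>R\<close> is the off-diagonal part of \<open>P\<close> and \<open>E = - diag P\<close>.\<close>

lemma funpow_eq_iff_mod_funpow_dist1:
  assumes "permutation p"
  shows "(p ^^ a) x = (p ^^ b) x \<longleftrightarrow> a mod funpow_dist1 p x x = b mod funpow_dist1 p x x"
proof -
  let ?k = "funpow_dist1 p x x"
  have x_in_orbit: "x \<in> orbit p x"
    using assms by (rule permutation_self_in_orbit)
  have "(p ^^ ?k) x = x"
    using x_in_orbit by (rule funpow_dist1_prop)
  then have "(p ^^ a) x = (p ^^ b) x \<longleftrightarrow> (p ^^ (a mod ?k)) x = (p ^^ (b mod ?k)) x"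
    by (simp add: funpow_mod_eq)
  also have "\<dots> \<longleftrightarrow> a mod ?k = b mod ?k"
    using inj_on_funpow_dist1[OF x_in_orbit] by (auto simp: inj_on_def)
  finally show ?thesis .
qed

definition monomial_mat :: "(nat \<Rightarrow> nat) \<Rightarrow> 'a::zero mat \<Rightarrow> bool" where
  "monomial_mat p A \<longleftrightarrow> dim_col A = dim_row A \<and> p permutes {..<dim_row A} \<and>
     (\<forall>r<dim_row A. \<forall>c<dim_row A. A $$ (r, c) \<noteq> 0 \<longleftrightarrow> c = p r)"

lemma signed_perm_mat_monomial:
  assumes "signed_perm_mat P"
  obtains p where "monomial_mat p P" and "\<And>r. r < dim_row P \<Longrightarrow> \<bar>P $$ (r, p r)\<bar> = 1"
proof -
  define n where "n = dim_row P"
  have square: "dim_col P = n"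
    and entries: "\<forall>i<n. \<forall>j<n. P $$ (i, j) \<in> {-1, 0, 1}"
    and row: "\<forall>i<n. \<exists>!j. j < n \<and> P $$ (i, j) \<noteq> 0"
    and col: "\<forall>j<n. \<exists>!i. i < n \<and> P $$ (i, j) \<noteq> 0"
    using assms unfolding signed_perm_mat_def n_def by (simp_all, metis)
  define p where "p r = (if r < n then THE c. c < n \<and> P $$ (r, c) \<noteq> 0 else r)" for r
  have p_spec: "p r < n \<and> P $$ (r, p r) \<noteq> 0" if "r < n" for r
    using theI'[OF row[rule_format, OF that]] that by (simp add: p_def)
  have support: "P $$ (r, c) \<noteq> 0 \<longleftrightarrow> c = p r" if "r < n" "c < n" for r c
    using row[rule_format, OF that(1)] p_spec[OF that(1)] that(2) by blast
  have "inj_on p {..<n}"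
  proof (rule inj_onI)
    fix a b assume "a \<in> {..<n}" "b \<in> {..<n}" "p a = p b"
    then show "a = b"
      using col[rule_format, of "p a"] p_spec by (metis lessThan_iff)
  qed
  moreover have "p ` {..<n} \<subseteq> {..<n}"
    using p_spec by auto
  ultimately have "bij_betw p {..<n} {..<n}"
    by (simp add: bij_betw_def endo_inj_surj)
  then have "p permutes {..<n}"
    by (rule bij_imp_permutes) (simp add: p_def)
  then have "monomial_mat p P"
    using square support by (simp add: monomial_mat_def n_def)
  moreover have "\<bar>P $$ (r, p r)\<bar> = 1" if "r < dim_row P" for r
    using entries p_spec[of r] that by (force simp: n_def)
  ultimately show ?thesis by (rule that)
qed

lemma monomial_mat_nonzero_iff:
  assumes "monomial_mat p A" "r < dim_row A" "c < dim_row A"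
  shows "A $$ (r, c) \<noteq> 0 \<longleftrightarrow> c = p r"
  using assms by (simp add: monomial_mat_def)

lemma monomial_mat_permutation:
  assumes "monomial_mat p A"
  shows "permutation p"
  using assms by (auto simp: monomial_mat_def permutation_permutes)

lemma monomial_mat_perm_less:
  assumes "monomial_mat p A" "r < dim_row A"
  shows "p r < dim_row A"
  using assms permutes_in_image[of p "{..<dim_row A}" r] by (simp add: monomial_mat_def)

lemma monomial_mat_funpow_less:
  assumes "monomial_mat p A" "i < dim_row A"
  shows "(p ^^ t) i < dim_row A"
  by (induction t) (simp_all add: assms(2) monomial_mat_perm_less[OF assms(1)])

lemma monomial_mat_nonzero:
  assumes "monomial_mat p A" "r < dim_row A"
  shows "A $$ (r, p r) \<noteq> 0"
  using monomial_mat_nonzero_iff[OF assms monomial_mat_perm_less[OF assms]] by simp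

lemma monomial_mat_mult_vec_nth:
  assumes "monomial_mat p A" "r < dim_row A" "v \<in> carrier_vec (dim_row A)"
  shows "(A *\<^sub>v v) $ r = A $$ (r, p r) * v $ p r"
proof -
  define n where "n = dim_row A"
  have p_r: "p r < n"
    using monomial_mat_perm_less[OF assms(1,2)] by (simp add: n_def)
  have "(A *\<^sub>v v) $ r = (\<Sum>j<n. A $$ (r, j) * v $ j)"
    using assms by (simp add: monomial_mat_def n_def scalar_prod_def atLeast0LessThan)
  also have "\<dots> = (\<Sum>j<n. if j = p r then A $$ (r, p r) * v $ p r else 0)"
    using monomial_mat_nonzero_iff[OF assms(1,2)] by (intro sum.cong) (force simp: n_def)+
  also have "\<dots> = A $$ (r, p r) * v $ p r"
    using p_r by simp
  finally show ?thesis .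
qed

lemma monomial_mat_cycle_eigenvalue:
  fixes A :: "'a::field mat"
  assumes A: "monomial_mat p A" and i: "i < dim_row A"
    and root: "l ^ funpow_dist1 p i i = (\<Prod>t<funpow_dist1 p i i. A $$ ((p ^^ t) i, (p ^^ Suc t) i))"
  shows "eigenvalue A l"
proof -
  define n where "n = dim_row A"
  define k where "k = funpow_dist1 p i i"
  define s where "s t = A $$ ((p ^^ t) i, (p ^^ Suc t) i)" for t
  define c where "c m = l ^ m / (\<Prod>t<m. s t)" for m
  define v where "v = vec n (\<lambda>r. if r \<in> orbit p i then c (funpow_dist p i r) else 0)"
  have perm: "p permutes {..<n}"
    using A by (simp add: monomial_mat_def n_def)
  have permutation: "permutation p"
    using A by (rule monomial_mat_permutation)
  then have i_orbit: "i \<in> orbit p i"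
    by (rule permutation_self_in_orbit)
  have orbit_less: "(p ^^ t) i < n" for t
    using monomial_mat_funpow_less[OF A i] by (simp add: n_def)
  have period: "(p ^^ k) i = i"
    unfolding k_def using i_orbit by (rule funpow_dist1_prop)
  have orbit_eq: "orbit p i = {(p ^^ m) i | m. m < k}"
    using period by (intro orbit_altdef_bounded) (auto simp: k_def)
  have s_nonzero: "s t \<noteq> 0" for t
    using monomial_mat_nonzero[OF A] orbit_less by (simp add: s_def n_def)
  have index: "funpow_dist p i ((p ^^ m) i) = m" if "m < k" for m
  proof -
    let ?d = "funpow_dist p i ((p ^^ m) i)"
    have "(p ^^ ?d) i = (p ^^ m) i"
      by (intro funpow_dist_prop funpow_in_orbit i_orbit)
    moreover have "?d \<le> m"
      unfolding funpow_dist_def by (rule Least_le) simp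
    ultimately show ?thesis
      using that funpow_eq_iff_mod_funpow_dist1[OF permutation] by (simp add: k_def)
  qed
  have v_orbit: "v $ ((p ^^ m) i) = c m" if "m < k" for m
    using index[OF that] orbit_less funpow_in_orbit[OF i_orbit] by (simp add: v_def)
  have v_carrier: "v \<in> carrier_vec n"
    by (simp add: v_def)
  have "A *\<^sub>v v = l \<cdot>\<^sub>v v"
  proof (rule eq_vecI)
    fix r assume "r < dim_vec (l \<cdot>\<^sub>v v)"
    then have r: "r < n"
      by (simp add: v_def)
    show "(A *\<^sub>v v) $ r = (l \<cdot>\<^sub>v v) $ r"
    proof (cases "r \<in> orbit p i")
      case True
      then obtain m where m: "m < k" "r = (p ^^ m) i"
        using orbit_eq by auto
      have "v $ p r = c (Suc m)"
      proof (cases "Suc m < k")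
        case True
        then show ?thesis
          using v_orbit[of "Suc m"] m by simp
      next
        case False
        then have "Suc m = k"
          using m by simp
        moreover have "c k = c 0"
          using root s_nonzero by (simp add: c_def s_def k_def)
        ultimately show ?thesis
          using v_orbit[of 0] m period by auto
      qed
      moreover have "s m * c (Suc m) = l * c m"
        using s_nonzero by (simp add: c_def)
      ultimately show ?thesis
        using monomial_mat_mult_vec_nth[OF A, of r v] r v_carrier v_orbit m
        by (simp add: s_def n_def)
    next
      case False
      then have "p r \<notin> orbit p i"
        using cyclic_on_f_in[OF perm cyclic_on_orbit[OF perm]] by blast
      then have "v $ p r = 0"
        using monomial_mat_perm_less[OF A, of r] r by (simp add: v_def n_def)
      then show ?thesis
        using monomial_mat_mult_vec_nth[OF A, of r v] r v_carrier False
        by (simp add: v_def n_def)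
    qed
  qed (simp add: v_def n_def)
  moreover have "v $ i = 1"
    using v_orbit[of 0] by (simp add: k_def c_def)
  then have "v \<noteq> 0\<^sub>v n"
    using i by (auto simp: n_def)
  ultimately show ?thesis
    using v_carrier by (auto simp: eigenvalue_def eigenvector_def n_def)
qed

lemma root_minus_one_in_right_half_plane:
  assumes "3 \<le> k"
  shows "\<exists>z::complex. z ^ k = -1 \<and> 0 < Re z"
proof (intro exI conjI)
  show "cis (pi / k) ^ k = -1"
    using assms by (simp add: DeMoivre)
  have "pi / k \<le> pi / 3"
    using assms by (intro divide_left_mono) auto
  moreover have "0 < pi / k"
    using assms by simp
  ultimately have "0 < cos (pi / k)"
    using pi_gt_zero by (intro cos_gt_zero_pi) linarith+
  then show "0 < Re (cis (pi / k))"
    by simp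
qed

context
  fixes P :: "real mat" and p :: "nat \<Rightarrow> nat"
  assumes monomial: "monomial_mat p P"
    and signs: "\<And>r. r < dim_row P \<Longrightarrow> \<bar>P $$ (r, p r)\<bar> = 1"
    and left_half_plane: "\<forall>z. eigenvalue (map_mat complex_of_real P) z \<longrightarrow> Re z \<le> 0"
begin

lemma cycle_short_and_negative:
  assumes i: "i < dim_row P"
  shows "funpow_dist1 p i i \<le> 2"
    and "(\<Prod>t<funpow_dist1 p i i. P $$ ((p ^^ t) i, (p ^^ Suc t) i)) = -1"
proof -
  define k where "k = funpow_dist1 p i i"
  define S where "S = (\<Prod>t<k. P $$ ((p ^^ t) i, (p ^^ Suc t) i))"
  have orbit_less: "(p ^^ t) i < dim_row P" for t
    using monomial_mat_funpow_less[OF monomial i] .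
  have no_root: "\<not> (l ^ k = complex_of_real S \<and> 0 < Re l)" for l
  proof
    assume l: "l ^ k = complex_of_real S \<and> 0 < Re l"
    have "monomial_mat p (map_mat complex_of_real P)"
      using monomial by (simp add: monomial_mat_def)
    moreover have "l ^ k = (\<Prod>t<k. map_mat complex_of_real P $$ ((p ^^ t) i, (p ^^ Suc t) i))"
      using l orbit_less monomial by (simp add: S_def monomial_mat_def del: funpow.simps)
    ultimately have "eigenvalue (map_mat complex_of_real P) l"
      using i by (intro monomial_mat_cycle_eigenvalue) (simp_all add: k_def)
    then show False
      using left_half_plane l by force
  qed
  have "\<bar>S\<bar> = 1"
    using signs orbit_less by (simp add: S_def abs_prod)
  moreover have "S \<noteq> 1"
    using no_root[of 1] by auto
  ultimately have S: "S = -1"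
    by auto
  then show "(\<Prod>t<k. P $$ ((p ^^ t) i, (p ^^ Suc t) i)) = -1"
    by (simp add: S_def)
  show "k \<le> 2"
  proof (rule ccontr)
    assume "\<not> k \<le> 2"
    then obtain z where "z ^ k = -1" "0 < Re z"
      using root_minus_one_in_right_half_plane[of k] by auto
    then show False
      using no_root[of z] S by simp
  qed
qed

lemma diagonal_entry_zero_or_minus_one:
  assumes i: "i < dim_row P"
  shows "P $$ (i, i) = 0 \<or> P $$ (i, i) = -1"
proof (cases "p i = i")
  case True
  then have "funpow_dist1 p i i = 1"
    by (simp add: funpow_dist_0)
  then show ?thesis
    using cycle_short_and_negative(2)[OF i] True by simp
next
  case False
  then show ?thesis
    using monomial_mat_nonzero_iff[OF monomial i i] by simp
qed

lemma off_diagonal_antisym_nonzero: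
  assumes i: "i < dim_row P" and j: "j < dim_row P" and "i \<noteq> j" "P $$ (i, j) \<noteq> 0"
  shows "P $$ (j, i) = - P $$ (i, j)"
proof -
  define k where "k = funpow_dist1 p i i"
  have p_i: "p i = j"
    using monomial_mat_nonzero_iff[OF monomial i j] assms(4) by simp
  have period: "(p ^^ k) i = i"
    unfolding k_def
    by (intro funpow_dist1_prop permutation_self_in_orbit monomial_mat_permutation[OF monomial])
  then have "k \<noteq> 1"
    using p_i \<open>i \<noteq> j\<close> by auto
  then have k: "k = 2"
    using cycle_short_and_negative(1)[OF i] by (simp add: k_def)
  then have "p j = i"
    using period p_i by (simp add: numeral_2_eq_2)
  then have "P $$ (i, j) * P $$ (j, i) = -1"
    using cycle_short_and_negative(2)[OF i] k p_i
    by (simp add: k_def numeral_2_eq_2 lessThan_Suc mult.commute)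
  moreover have "\<bar>P $$ (i, j)\<bar> = 1"
    using signs[OF i] p_i by simp
  ultimately show ?thesis
    by (auto simp: abs_if split: if_splits)
qed

lemma off_diagonal_antisym:
  assumes "i < dim_row P" "j < dim_row P" "i \<noteq> j"
  shows "P $$ (j, i) = - P $$ (i, j)"
  using off_diagonal_antisym_nonzero[OF assms] off_diagonal_antisym_nonzero[OF assms(2,1)] assms(3)
  by force

end

theorem lemma1:
  fixes P :: "real mat" and n :: nat
  assumes "P \<in> carrier_mat n n"
    and "signed_perm_mat P"
    and "\<forall>z. eigenvalue (map_mat complex_of_real P) z \<longrightarrow> Re z \<le> 0"
  shows "\<exists>R E. R \<in> carrier_mat n n \<and> E \<in> carrier_mat n n \<and>
           transpose_mat R = - R \<and>
           diagonal_mat E \<and> (\<forall>i<n. E $$ (i,i) = 0 \<or> E $$ (i,i) = 1) \<and>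
           P = R - E"
proof -
  obtain p where p: "monomial_mat p P" "\<And>r. r < dim_row P \<Longrightarrow> \<bar>P $$ (r, p r)\<bar> = 1"
    using signed_perm_mat_monomial[OF assms(2)] by blast
  have dims: "dim_row P = n" "dim_col P = n"
    using assms(1) by auto
  note diagonal = diagonal_entry_zero_or_minus_one[OF p assms(3), unfolded dims]
  note antisym = off_diagonal_antisym[OF p assms(3), unfolded dims]
  define R where "R = mat n n (\<lambda>(i, j). if i = j then 0 else P $$ (i, j))"
  define E where "E = mat n n (\<lambda>(i, j). if i = j then - P $$ (i, i) else 0)"
  have "transpose_mat R = - R"
  proof (rule eq_matI)
    fix i j assume "i < dim_row (- R)" "j < dim_col (- R)"
    then show "transpose_mat R $$ (i, j) = (- R) $$ (i, j)"
      using antisym[of j i] by (simp add: R_def)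
  qed (simp_all add: R_def)
  moreover have "P = R - E"
    using dims by (intro eq_matI) (auto simp: R_def E_def)
  moreover have "\<forall>i<n. E $$ (i, i) = 0 \<or> E $$ (i, i) = 1"
    using diagonal by (auto simp: E_def)
  moreover have "diagonal_mat E"
    by (simp add: diagonal_mat_def E_def)
  moreover have "R \<in> carrier_mat n n" "E \<in> carrier_mat n n"
    by (simp_all add: R_def E_def)
  ultimately show ?thesis
    by blast
qed

end
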